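(* The set $\mathcal S(X)$ of skew-convex functions $X\to K$, equipped with pointwise addition and the skew product $\diamond$, is a ring with identity (the constant function $1$).
   Context: Let $K$ be a skew field, $K^*=K\setminus\{0\}$, and let $X$ be a nonempty set on which $K^*$ acts on the left, written $(a,x)\mapsto{}^{a}x$. $\mathcal F(X)$ is the set of all functions $X\to K$ with pointwise addition; the constant function with value $a\in K$ is denoted $a$. The skew product of $f,g\in\mathcal F(X)$ is $(f\diamond g)(x)=f({}^{g(x)}x)\,g(x)$ if $g(x)\neq0$ and $0$ if $g(x)=0$. A function $f\in\mathcal F(X)$ is skew convex if $f\diamond(a+b)=f\diamond a+f\diamond b$ for all $a,b\in K$ (viewed as constant functions). $\mathcal S(X)$ denotes the set of skew-convex functions. *)

theory Defs
  imports Main "HOL-Algebra.Ring"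
begin

definition left_action :: "('k::division_ring \<Rightarrow> 'x \<Rightarrow> 'x) \<Rightarrow> bool" where
  "left_action act \<longleftrightarrow>
     (\<forall>x. act 1 x = x) \<and>
     (\<forall>a b x. a \<noteq> 0 \<longrightarrow> b \<noteq> 0 \<longrightarrow> act a (act b x) = act (a * b) x)"

definition skew_prod :: "('k::division_ring \<Rightarrow> 'x \<Rightarrow> 'x) \<Rightarrow> ('x \<Rightarrow> 'k) \<Rightarrow> ('x \<Rightarrow> 'k) \<Rightarrow> ('x \<Rightarrow> 'k)" where
  "skew_prod act f g = (\<lambda>x. if g x = 0 then 0 else f (act (g x) x) * g x)"

definition skew_convex :: "('k::division_ring \<Rightarrow> 'x \<Rightarrow> 'x) \<Rightarrow> ('x \<Rightarrow> 'k) \<Rightarrow> bool" where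
  "skew_convex act f \<longleftrightarrow>
     (\<forall>a b. \<forall>x. skew_prod act f (\<lambda>_. a + b) x = skew_prod act f (\<lambda>_. a) x + skew_prod act f (\<lambda>_. b) x)"

definition skew_convex_ring :: "('k::division_ring \<Rightarrow> 'x \<Rightarrow> 'x) \<Rightarrow> ('x \<Rightarrow> 'k) ring" where
  "skew_convex_ring act =
     \<lparr>carrier = {f. skew_convex act f},
      mult = skew_prod act,
      one = (\<lambda>_. 1),
      zero = (\<lambda>_. 0),
      add = (\<lambda>f g x. f x + g x)\<rparr>"

end

theory Submission
  imports Defs
begin

text \<open>The skew product is associative because the action is: evaluating
  \<open>f \<diamond> (g \<diamond> h)\<close> at \<open>x\<close> moves \<open>x\<close> by \<open>g(y) h(x)\<close> with \<open>y = h(x) x\<close>, which is the same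
  as first moving by \<open>h(x)\<close> and then by \<open>g(y)\<close>. Additivity in the left factor is
  pointwise, and skew convexity of \<open>f\<close> is exactly additivity of \<open>f \<diamond> -\<close> on constants,
  which extends to arbitrary functions since \<open>(f \<diamond> g)(x)\<close> depends on \<open>g\<close> only
  through \<open>g(x)\<close>; together with associativity this makes \<open>\<S>(X)\<close> closed under
  the skew product.\<close>

lemma skew_prod_assoc:
  assumes "left_action act"
  shows "skew_prod act (skew_prod act f g) h = skew_prod act f (skew_prod act g h)"
proof
  fix x
  show "skew_prod act (skew_prod act f g) h x = skew_prod act f (skew_prod act g h) x"
  proof (cases "h x = 0")
    case True
    then show ?thesis by (simp add: skew_prod_def)
  next
    case hx: False
    let ?y = "act (h x) x"
    show ?thesis
    proof (cases "g ?y = 0")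
      case True
      then show ?thesis using hx by (simp add: skew_prod_def)
    next
      case gy: False
      have "act (g ?y * h x) x = act (g ?y) ?y"
        using assms hx gy by (simp add: left_action_def)
      then show ?thesis using hx gy by (simp add: skew_prod_def mult.assoc)
    qed
  qed
qed

lemma skew_convex_iff_distrib_left:
  "skew_convex act f \<longleftrightarrow>
     (\<forall>g h. skew_prod act f (\<lambda>x. g x + h x) = (\<lambda>x. skew_prod act f g x + skew_prod act f h x))"
proof
  assume f: "skew_convex act f"
  show "\<forall>g h. skew_prod act f (\<lambda>x. g x + h x) = (\<lambda>x. skew_prod act f g x + skew_prod act f h x)"
  proof (intro allI ext)
    fix g h x
    have "skew_prod act f (\<lambda>_. g x + h x) x
            = skew_prod act f (\<lambda>_. g x) x + skew_prod act f (\<lambda>_. h x) x"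
      using f by (simp add: skew_convex_def)
    then show "skew_prod act f (\<lambda>x. g x + h x) x = skew_prod act f g x + skew_prod act f h x"
      by (simp add: skew_prod_def)
  qed
next
  assume "\<forall>g h. skew_prod act f (\<lambda>x. g x + h x) = (\<lambda>x. skew_prod act f g x + skew_prod act f h x)"
  then show "skew_convex act f"
    by (simp add: skew_convex_def)
qed

lemma skew_prod_distrib_left:
  assumes "skew_convex act f"
  shows "skew_prod act f (\<lambda>x. g x + h x) = (\<lambda>x. skew_prod act f g x + skew_prod act f h x)"
  using assms by (simp add: skew_convex_iff_distrib_left)

lemma skew_prod_distrib_right:
  "skew_prod act (\<lambda>x. f x + g x) h = (\<lambda>x. skew_prod act f h x + skew_prod act g h x)"
  by (auto simp: skew_prod_def distrib_right)

lemma skew_prod_minus_left: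
  "skew_prod act (\<lambda>x. - f x) h = (\<lambda>x. - skew_prod act f h x)"
  by (auto simp: skew_prod_def)

lemma skew_prod_one_left: "skew_prod act (\<lambda>_. 1) f = f"
  by (auto simp: skew_prod_def)

lemma skew_prod_one_right:
  assumes "left_action act"
  shows "skew_prod act f (\<lambda>_. 1) = f"
  using assms by (auto simp: skew_prod_def left_action_def)

lemma skew_convex_zero: "skew_convex act (\<lambda>_. 0)"
  by (simp add: skew_convex_def skew_prod_def)

lemma skew_convex_one: "skew_convex act (\<lambda>_. 1)"
  by (simp add: skew_convex_def skew_prod_def)

lemma skew_convex_add:
  assumes "skew_convex act f" "skew_convex act g"
  shows "skew_convex act (\<lambda>x. f x + g x)"
  using assms by (simp add: skew_convex_def skew_prod_distrib_right)

lemma skew_convex_minus: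
  assumes "skew_convex act f"
  shows "skew_convex act (\<lambda>x. - f x)"
  using assms by (simp add: skew_convex_def skew_prod_minus_left)

lemma skew_convex_skew_prod:
  assumes "left_action act" "skew_convex act f" "skew_convex act g"
  shows "skew_convex act (skew_prod act f g)"
  unfolding skew_convex_iff_distrib_left
  using assms by (simp add: skew_prod_assoc skew_prod_distrib_left)

theorem theorem2p4:
  fixes act :: "'k::division_ring \<Rightarrow> 'x \<Rightarrow> 'x"
  assumes "left_action act"
  shows "ring (skew_convex_ring act)"
proof (rule ringI)
  show "abelian_group (skew_convex_ring act)"
  proof (rule abelian_groupI)
    fix f assume "f \<in> carrier (skew_convex_ring act)"
    then show "\<exists>g\<in>carrier (skew_convex_ring act). g \<oplus>\<^bsub>skew_convex_ring act\<^esub> f = \<zero>\<^bsub>skew_convex_ring act\<^esub>"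
      by (intro bexI[of _ "\<lambda>x. - f x"]) (simp_all add: skew_convex_ring_def skew_convex_minus)
  qed (auto simp: skew_convex_ring_def skew_convex_zero skew_convex_add add.assoc add.commute)
  show "monoid (skew_convex_ring act)"
    by (rule monoidI)
      (auto simp: skew_convex_ring_def assms skew_convex_one skew_convex_skew_prod
        skew_prod_assoc skew_prod_one_left skew_prod_one_right)
qed (auto simp: skew_convex_ring_def skew_prod_distrib_left skew_prod_distrib_right)

end
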